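(* Let $B$ be a skew brace with multiplicative identity $1$ and $\mathrm{T}(B)$ its associated near-truss. Let $P$ be a non-empty subset of $B$. Then $P$ is a paragon in $\mathrm{T}(B)$ if and only if, for all $p\in P$, the set $P_p^1:=\{[q,p,1]\mid q\in P\}=\{q-p+1\mid q\in P\}$ is an ideal in $B$.
   Context: A skew brace is $(B,+,\cdot)$ with $(B,+)$ and $(B,\cdot)$ groups and $a(b+c)=ab-a+ac$. An ideal of a skew brace $B$ is a subset $B'$ such that $(B',+)$ is a normal subgroup of $(B,+)$, $aB'=B'a$ for all $a\in B$, and $ab-a\in B'$ for all $a\in B$, $b\in B'$. $\mathrm{T}(B)$ is $B$ with ternary operation $[a,b,c]=a-b+c$ and the multiplication of $B$. A normal sub-heap is a non-empty subset $S$ closed under $[-,-,-]$ with $[[a,e,s],a,e]\in S$ for all $a$ and $e,s\in S$; $a\sim_S b$ iff $[a,b,s]\in S$ for some (equivalently all) $s\in S$. A sub-heap $S$ is closed if $[ts',ts,s]\in S$ and $[s't,st,s]\in S$ for all $s,s'\in S$, $t$. A paragon is a non-empty normal sub-heap $P$ all of whose $\sim_P$-classes are closed sub-heaps. *)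

theory Defs
  imports "HOL-Algebra.Algebra"
begin

text \<open>A skew brace on the set B is given by two monoid records A (additive, written
  with mult A = +) and M (multiplicative) on the same carrier.\<close>

definition skew_brace :: "'a monoid \<Rightarrow> 'a monoid \<Rightarrow> bool" where
  "skew_brace A M \<longleftrightarrow> group A \<and> group M \<and> carrier A = carrier M \<and>
     (\<forall>a\<in>carrier A. \<forall>b\<in>carrier A. \<forall>c\<in>carrier A.
        a \<otimes>\<^bsub>M\<^esub> (b \<otimes>\<^bsub>A\<^esub> c) =
        ((a \<otimes>\<^bsub>M\<^esub> b) \<otimes>\<^bsub>A\<^esub> inv\<^bsub>A\<^esub> a) \<otimes>\<^bsub>A\<^esub> (a \<otimes>\<^bsub>M\<^esub> c))"

definition sb_ideal :: "'a monoid \<Rightarrow> 'a monoid \<Rightarrow> 'a set \<Rightarrow> bool" where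
  "sb_ideal A M I \<longleftrightarrow> I \<lhd> A \<and>
     (\<forall>a\<in>carrier A. (\<lambda>x. a \<otimes>\<^bsub>M\<^esub> x) ` I = (\<lambda>x. x \<otimes>\<^bsub>M\<^esub> a) ` I) \<and>
     (\<forall>a\<in>carrier A. \<forall>b\<in>I. (a \<otimes>\<^bsub>M\<^esub> b) \<otimes>\<^bsub>A\<^esub> inv\<^bsub>A\<^esub> a \<in> I)"

definition hbr :: "'a monoid \<Rightarrow> 'a \<Rightarrow> 'a \<Rightarrow> 'a \<Rightarrow> 'a" where
  "hbr A a b c = (a \<otimes>\<^bsub>A\<^esub> inv\<^bsub>A\<^esub> b) \<otimes>\<^bsub>A\<^esub> c"

definition subheap :: "'a monoid \<Rightarrow> 'a set \<Rightarrow> bool" where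
  "subheap A S \<longleftrightarrow> S \<noteq> {} \<and> S \<subseteq> carrier A \<and>
     (\<forall>x\<in>S. \<forall>y\<in>S. \<forall>z\<in>S. hbr A x y z \<in> S)"

definition normal_subheap :: "'a monoid \<Rightarrow> 'a set \<Rightarrow> bool" where
  "normal_subheap A S \<longleftrightarrow> subheap A S \<and>
     (\<forall>a\<in>carrier A. \<forall>e\<in>S. \<forall>s\<in>S. hbr A (hbr A a e s) a e \<in> S)"

definition heap_rel :: "'a monoid \<Rightarrow> 'a set \<Rightarrow> 'a \<Rightarrow> 'a \<Rightarrow> bool" where
  "heap_rel A S a b \<longleftrightarrow> (\<exists>s\<in>S. hbr A a b s \<in> S)"

definition heap_class :: "'a monoid \<Rightarrow> 'a set \<Rightarrow> 'a \<Rightarrow> 'a set" where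
  "heap_class A S a = {b \<in> carrier A. heap_rel A S a b}"

definition closed_subheap :: "'a monoid \<Rightarrow> 'a monoid \<Rightarrow> 'a set \<Rightarrow> bool" where
  "closed_subheap A M S \<longleftrightarrow> subheap A S \<and>
     (\<forall>s\<in>S. \<forall>s'\<in>S. \<forall>t\<in>carrier A.
        hbr A (t \<otimes>\<^bsub>M\<^esub> s') (t \<otimes>\<^bsub>M\<^esub> s) s \<in> S \<and>
        hbr A (s' \<otimes>\<^bsub>M\<^esub> t) (s \<otimes>\<^bsub>M\<^esub> t) s \<in> S)"

definition paragon :: "'a monoid \<Rightarrow> 'a monoid \<Rightarrow> 'a set \<Rightarrow> bool" where
  "paragon A M P \<longleftrightarrow> P \<noteq> {} \<and> normal_subheap A P \<and>
     (\<forall>a\<in>carrier A. closed_subheap A M (heap_class A P a))"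

end

theory Submission
  imports Defs
begin

text \<open>
  For a sub-heap \<open>P\<close> of the additive group and \<open>p \<in> P\<close>, the translate \<open>N = P - p\<close> is a
  subgroup independent of \<open>p\<close>; the \<open>\<sim>\<^sub>P\<close>-classes are the cosets \<open>N + a\<close>, and \<open>P\<close> is a
  normal sub-heap iff \<open>N\<close> is normal. Closedness of the class \<open>N\<close> of \<open>1 = 0\<close>, tested with
  \<open>s = 1\<close>, says exactly \<open>a n - a \<in> N\<close> and \<open>n a - a \<in> N\<close>, which for a normal subgroup
  characterises ideals. Conversely, congruence modulo an ideal is compatible with the
  multiplication on both sides, so every coset of \<open>N\<close> is closed. Below, the additive group
  is written \<open>\<otimes>\<close> (so \<open>N\<close> is \<open>P #> inv p\<close>) and the multiplication \<open>\<star>\<close>.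
\<close>

text \<open>The heap notions are typed on \<open>'a monoid\<close>, so \<open>group\<close> is re-entered at that type.\<close>

locale group_heap = group G for G :: "'a monoid" (structure)
begin

lemma inv_cancel_left [simp]:
  "x \<in> carrier G \<Longrightarrow> y \<in> carrier G \<Longrightarrow> x \<otimes> (inv x \<otimes> y) = y"
  "x \<in> carrier G \<Longrightarrow> y \<in> carrier G \<Longrightarrow> inv x \<otimes> (x \<otimes> y) = y"
  by (simp_all add: m_assoc[symmetric])

lemma mem_r_coset_inv_iff:
  assumes "P \<subseteq> carrier G" "p \<in> carrier G"
  shows "w \<in> P #> inv p \<longleftrightarrow> w \<in> carrier G \<and> w \<otimes> p \<in> P"
proof
  assume "w \<in> P #> inv p"
  then obtain q where "q \<in> P" "w = q \<otimes> inv p"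
    unfolding r_coset_def by auto
  then show "w \<in> carrier G \<and> w \<otimes> p \<in> P"
    using assms by (auto simp: m_assoc)
next
  assume "w \<in> carrier G \<and> w \<otimes> p \<in> P"
  then have "w \<otimes> p \<otimes> inv p \<in> P #> inv p"
    using assms by (intro rcosI) auto
  then show "w \<in> P #> inv p"
    using assms \<open>w \<in> carrier G \<and> w \<otimes> p \<in> P\<close> by (simp add: m_assoc)
qed

lemma subheap_iff_subgroup_r_coset:
  assumes P: "P \<subseteq> carrier G" and p: "p \<in> P"
  shows "subheap G P \<longleftrightarrow> subgroup (P #> inv p) G"
proof -
  have pc: "p \<in> carrier G" using P p by auto
  note mem = mem_r_coset_inv_iff[OF P pc]
  show ?thesis
  proof
    assume sh: "subheap G P"
    then have hbr: "hbr G x y z \<in> P" if "x \<in> P" "y \<in> P" "z \<in> P" for x y z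
      using that unfolding subheap_def by blast
    show "subgroup (P #> inv p) G"
    proof (rule subgroupI)
      show "P #> inv p \<subseteq> carrier G" using mem by auto
      show "P #> inv p \<noteq> {}" using mem[of \<one>] p pc by auto
    next
      fix w assume "w \<in> P #> inv p"
      then have w: "w \<in> carrier G" "w \<otimes> p \<in> P" using mem by auto
      have "hbr G p (w \<otimes> p) p = inv w \<otimes> p"
        unfolding hbr_def using w pc by (simp add: m_assoc inv_mult_group)
      then show "inv w \<in> P #> inv p"
        using mem hbr[OF p w(2) p] w by simp
    next
      fix v w assume "v \<in> P #> inv p" "w \<in> P #> inv p"
      then have v: "v \<in> carrier G" "v \<otimes> p \<in> P" and w: "w \<in> carrier G" "w \<otimes> p \<in> P"
        using mem by auto
      have "hbr G (v \<otimes> p) p (w \<otimes> p) = v \<otimes> w \<otimes> p"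
        unfolding hbr_def using v w pc by (simp add: m_assoc)
      then show "v \<otimes> w \<in> P #> inv p"
        using mem hbr[OF v(2) p w(2)] v w by simp
    qed
  next
    assume sg: "subgroup (P #> inv p) G"
    show "subheap G P"
      unfolding subheap_def
    proof (intro conjI ballI)
      fix x y z assume xyz: "x \<in> P" "y \<in> P" "z \<in> P"
      then have "x \<otimes> inv p \<in> P #> inv p" "y \<otimes> inv p \<in> P #> inv p" "z \<otimes> inv p \<in> P #> inv p"
        using P pc by (auto intro: rcosI)
      then have "(x \<otimes> inv p) \<otimes> inv (y \<otimes> inv p) \<otimes> (z \<otimes> inv p) \<in> P #> inv p"
        using sg by (simp add: subgroup.m_closed subgroup.m_inv_closed)
      also have "(x \<otimes> inv p) \<otimes> inv (y \<otimes> inv p) \<otimes> (z \<otimes> inv p) = hbr G x y z \<otimes> inv p"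
        unfolding hbr_def using xyz P pc by (simp add: subsetD m_assoc inv_mult_group)
      finally show "hbr G x y z \<in> P"
        using mem xyz P pc unfolding hbr_def by (simp add: subsetD m_assoc)
    qed (use P p in auto)
  qed
qed

lemma subheap_r_coset_inv_eq:
  assumes "subheap G P" "p \<in> P" "q \<in> P"
  shows "P #> inv p = P #> inv q"
proof -
  have P: "P \<subseteq> carrier G" using assms(1) unfolding subheap_def by auto
  have pc: "p \<in> carrier G" and qc: "q \<in> carrier G" using P assms by auto
  have shift: "w \<otimes> q' \<in> P" if "w \<in> carrier G" "w \<otimes> p' \<in> P" "p' \<in> P" "q' \<in> P" for w p' q'
  proof -
    have "hbr G (w \<otimes> p') p' q' \<in> P"
      using assms(1) that unfolding subheap_def by blast
    then show ?thesis unfolding hbr_def using that P by (simp add: m_assoc subsetD)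
  qed
  show ?thesis
    using assms shift mem_r_coset_inv_iff[OF P pc] mem_r_coset_inv_iff[OF P qc] by blast
qed

lemma normal_subheap_iff_normal_r_coset:
  assumes P: "P \<subseteq> carrier G" and p: "p \<in> P"
  shows "normal_subheap G P \<longleftrightarrow> P #> inv p \<lhd> G"
proof -
  have pc: "p \<in> carrier G" using P p by auto
  note mem = mem_r_coset_inv_iff[OF P pc]
  show ?thesis
  proof
    assume nsh: "normal_subheap G P"
    then have sg: "subgroup (P #> inv p) G"
      using subheap_iff_subgroup_r_coset[OF P p] unfolding normal_subheap_def by blast
    show "P #> inv p \<lhd> G"
      unfolding normal_inv_iff
    proof (intro conjI sg ballI)
      fix x w assume x: "x \<in> carrier G" and "w \<in> P #> inv p"
      then have w: "w \<in> carrier G" "w \<otimes> p \<in> P" using mem by auto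
      have "hbr G (hbr G (x \<otimes> p) p (w \<otimes> p)) (x \<otimes> p) p \<in> P"
        using nsh x pc w p unfolding normal_subheap_def by blast
      also have "hbr G (hbr G (x \<otimes> p) p (w \<otimes> p)) (x \<otimes> p) p = x \<otimes> w \<otimes> inv x \<otimes> p"
        unfolding hbr_def using x w pc by (simp add: m_assoc inv_mult_group)
      finally show "x \<otimes> w \<otimes> inv x \<in> P #> inv p" using mem x w by simp
    qed
  next
    assume N: "P #> inv p \<lhd> G"
    then have sh: "subheap G P"
      using subheap_iff_subgroup_r_coset[OF P p] normal_imp_subgroup by blast
    show "normal_subheap G P"
      unfolding normal_subheap_def
    proof (intro conjI sh ballI)
      fix a e s assume a: "a \<in> carrier G" and e: "e \<in> P" and s: "s \<in> P"
      have ec: "e \<in> carrier G" and sc: "s \<in> carrier G" using e s P by auto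
      note mem_e = mem_r_coset_inv_iff[OF P ec, unfolded subheap_r_coset_inv_eq[OF sh e p]]
      have "s \<otimes> inv e \<in> P #> inv p" using mem_e s sc ec by (simp add: m_assoc)
      then have "(a \<otimes> inv e) \<otimes> (s \<otimes> inv e) \<otimes> inv (a \<otimes> inv e) \<in> P #> inv p"
        using N a ec by (simp add: normal.inv_op_closed2)
      then have "(a \<otimes> inv e) \<otimes> (s \<otimes> inv e) \<otimes> inv (a \<otimes> inv e) \<otimes> e \<in> P"
        using mem_e by blast
      also have "(a \<otimes> inv e) \<otimes> (s \<otimes> inv e) \<otimes> inv (a \<otimes> inv e) \<otimes> e = hbr G (hbr G a e s) a e"
        unfolding hbr_def using a ec sc by (simp add: m_assoc inv_mult_group)
      finally show "hbr G (hbr G a e s) a e \<in> P" .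
    qed
  qed
qed

lemma subheap_r_coset:
  assumes "subgroup H G" "a \<in> carrier G"
  shows "subheap G (H #> a)"
proof -
  have H: "H \<subseteq> carrier G" using assms(1) subgroup.subset by blast
  have "(H #> a) #> inv a = H"
    using H assms(2) by (simp add: coset_mult_assoc)
  then show ?thesis
    using subheap_iff_subgroup_r_coset[of "H #> a" a] assms H
    by (simp add: r_coset_subset_G rcos_self)
qed

lemma hbr_mem_r_coset:
  assumes H: "subgroup H G" and "x \<otimes> inv y \<in> H" "z \<in> H #> a"
    and "x \<in> carrier G" "y \<in> carrier G" "a \<in> carrier G"
  shows "hbr G x y z \<in> H #> a"
proof -
  have z: "z \<in> carrier G" using assms r_coset_subset_G subgroup.subset by blast
  have "(x \<otimes> inv y) \<otimes> (z \<otimes> inv a) \<in> H"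
    using assms subgroup.rcos_module_imp[OF H is_group] subgroup.m_closed[OF H] by blast
  also have "(x \<otimes> inv y) \<otimes> (z \<otimes> inv a) = hbr G x y z \<otimes> inv a"
    unfolding hbr_def using assms z by (simp add: m_assoc)
  finally show ?thesis
    using subgroup.rcos_module[OF H is_group] assms z by (simp add: hbr_def)
qed

lemma heap_class_eq_r_coset:
  assumes sh: "subheap G P" and p: "p \<in> P" and a: "a \<in> carrier G"
  shows "heap_class G P a = (P #> inv p) #> a"
proof -
  have P: "P \<subseteq> carrier G" using sh unfolding subheap_def by auto
  have sg: "subgroup (P #> inv p) G" using subheap_iff_subgroup_r_coset[OF P p] sh by blast
  have "b \<in> heap_class G P a \<longleftrightarrow> b \<in> (P #> inv p) #> a" for b
  proof -
    have "b \<in> heap_class G P a \<longleftrightarrow> b \<in> carrier G \<and> (\<exists>s\<in>P. a \<otimes> inv b \<in> P #> inv s)"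
      unfolding heap_class_def heap_rel_def hbr_def
      using P a by (auto simp: mem_r_coset_inv_iff subsetD)
    also have "\<dots> \<longleftrightarrow> b \<in> carrier G \<and> a \<otimes> inv b \<in> P #> inv p"
      using subheap_r_coset_inv_eq[OF sh p] p by blast
    also have "\<dots> \<longleftrightarrow> b \<in> carrier G \<and> b \<otimes> inv a \<in> P #> inv p"
      using a subgroup.m_inv_closed[OF sg] by (metis inv_inv inv_mult_group inv_closed)
    also have "\<dots> \<longleftrightarrow> b \<in> (P #> inv p) #> a"
      using a subgroup.rcos_module[OF sg is_group] r_coset_subset_G subgroup.subset[OF sg] by blast
    finally show ?thesis .
  qed
  then show ?thesis by blast
qed

lemma hbr_one_set_eq_r_coset:
  assumes "P \<subseteq> carrier G" "p \<in> carrier G"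
  shows "{hbr G q p \<one> | q. q \<in> P} = P #> inv p"
proof -
  have "(\<lambda>q. hbr G q p \<one>) ` P = (\<lambda>q. q \<otimes> inv p) ` P"
    using assms unfolding hbr_def by (intro image_cong) (auto simp: subsetD)
  then show ?thesis by (simp add: Setcompr_eq_image r_coset_def UNION_singleton_eq_range)
qed

end

locale skew_brace_struct =
  fixes A :: "'a monoid" (structure) and M :: "'a monoid"
  assumes skew_brace: "skew_brace A M"
begin

abbreviation bmult :: "'a \<Rightarrow> 'a \<Rightarrow> 'a" (infixl \<open>\<star>\<close> 75)
  where "a \<star> b \<equiv> a \<otimes>\<^bsub>M\<^esub> b"

sublocale A: group_heap A
  using skew_brace unfolding skew_brace_def group_heap_def by blast

sublocale M: group M
  using skew_brace unfolding skew_brace_def by blast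

lemma carrier_eq: "carrier M = carrier A"
  using skew_brace unfolding skew_brace_def by blast

lemma left_distrib:
  "a \<in> carrier A \<Longrightarrow> b \<in> carrier A \<Longrightarrow> c \<in> carrier A \<Longrightarrow> a \<star> (b \<otimes> c) = a \<star> b \<otimes> inv a \<otimes> a \<star> c"
  using skew_brace unfolding skew_brace_def by blast

lemma bmult_closed [simp]: "a \<in> carrier A \<Longrightarrow> b \<in> carrier A \<Longrightarrow> a \<star> b \<in> carrier A"
  using carrier_eq by (metis M.m_closed)

lemma bmult_assoc: "a \<in> carrier A \<Longrightarrow> b \<in> carrier A \<Longrightarrow> c \<in> carrier A \<Longrightarrow> a \<star> b \<star> c = a \<star> (b \<star> c)"
  using carrier_eq by (metis M.m_assoc)

lemma M_one_eq [simp]: "\<one>\<^bsub>M\<^esub> = \<one>"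
proof -
  have e: "\<one>\<^bsub>M\<^esub> \<in> carrier A" and e1: "\<one>\<^bsub>M\<^esub> \<star> \<one> = \<one>" using carrier_eq by auto
  have "\<one>\<^bsub>M\<^esub> \<star> (\<one> \<otimes> \<one>) = \<one>\<^bsub>M\<^esub> \<star> \<one> \<otimes> inv \<one>\<^bsub>M\<^esub> \<otimes> \<one>\<^bsub>M\<^esub> \<star> \<one>"
    using left_distrib[OF e A.one_closed A.one_closed] .
  then have "inv \<one>\<^bsub>M\<^esub> = \<one>" using e by (simp add: e1)
  then show ?thesis using e by (metis A.inv_inv A.inv_one)
qed

lemma bmult_one [simp]: "a \<in> carrier A \<Longrightarrow> a \<star> \<one> = a" "a \<in> carrier A \<Longrightarrow> \<one> \<star> a = a"
  using carrier_eq M_one_eq by (metis M.r_one, metis M.l_one)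

lemma bmult_inv [simp]:
  "a \<in> carrier A \<Longrightarrow> inv\<^bsub>M\<^esub> a \<in> carrier A"
  "a \<in> carrier A \<Longrightarrow> a \<star> inv\<^bsub>M\<^esub> a = \<one>"
  "a \<in> carrier A \<Longrightarrow> inv\<^bsub>M\<^esub> a \<star> a = \<one>"
  "a \<in> carrier A \<Longrightarrow> inv\<^bsub>M\<^esub> (inv\<^bsub>M\<^esub> a) = a"
  using carrier_eq M_one_eq by auto

lemma bmult_add_bmult_inv: "a \<in> carrier A \<Longrightarrow> m \<in> carrier A \<Longrightarrow> a \<star> (m \<otimes> inv\<^bsub>M\<^esub> a) = a \<star> m \<otimes> inv a"
  by (simp add: left_distrib A.m_assoc)

lemma left_translate_subset_right_translate:
  assumes N: "N \<subseteq> carrier A" and a: "a \<in> carrier A"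
    and lambda: "\<And>b n. b \<in> carrier A \<Longrightarrow> n \<in> N \<Longrightarrow> b \<star> n \<otimes> inv b \<in> N"
    and rho: "\<And>b n. b \<in> carrier A \<Longrightarrow> n \<in> N \<Longrightarrow> n \<star> b \<otimes> inv b \<in> N"
  shows "(\<lambda>x. a \<star> x) ` N \<subseteq> (\<lambda>x. x \<star> a) ` N"
proof clarify
  fix n assume n: "n \<in> N"
  define u where "u = inv\<^bsub>M\<^esub> a"
  have u: "u \<in> carrier A" "u \<star> a = \<one>" using a unfolding u_def by auto
  define m where "m = n \<star> u \<otimes> inv u"
  have m: "m \<in> N" "m \<in> carrier A" unfolding m_def using rho u n N by auto
  have "a \<star> n \<star> u = a \<star> (m \<otimes> u)"
    unfolding m_def using a u n N by (simp add: bmult_assoc A.m_assoc subsetD)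
  also have "\<dots> = a \<star> m \<otimes> inv a" unfolding u_def using a m(2) by (rule bmult_add_bmult_inv)
  finally have "a \<star> n = (a \<star> m \<otimes> inv a) \<star> a"
    using a u n N by (metis bmult_assoc bmult_one(1) bmult_closed subsetD)
  then show "a \<star> n \<in> (\<lambda>x. x \<star> a) ` N" using lambda[OF a m(1)] by blast
qed

lemma right_translate_subset_left_translate:
  assumes N: "N \<subseteq> carrier A" and a: "a \<in> carrier A"
    and lambda: "\<And>b n. b \<in> carrier A \<Longrightarrow> n \<in> N \<Longrightarrow> b \<star> n \<otimes> inv b \<in> N"
    and rho: "\<And>b n. b \<in> carrier A \<Longrightarrow> n \<in> N \<Longrightarrow> n \<star> b \<otimes> inv b \<in> N"
  shows "(\<lambda>x. x \<star> a) ` N \<subseteq> (\<lambda>x. a \<star> x) ` N"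
proof clarify
  fix n assume n: "n \<in> N"
  define u where "u = inv\<^bsub>M\<^esub> a"
  have u: "u \<in> carrier A" "a \<star> u = \<one>" "inv\<^bsub>M\<^esub> u = a" using a unfolding u_def by auto
  define m where "m = n \<star> a \<otimes> inv a"
  have m: "m \<in> N" "m \<in> carrier A" unfolding m_def using rho a n N by auto
  have "u \<star> (n \<star> a) = u \<star> (m \<otimes> inv\<^bsub>M\<^esub> u)"
    unfolding m_def u(3) using a n N by (simp add: A.m_assoc subsetD)
  also have "\<dots> = u \<star> m \<otimes> inv u" using u(1) m(2) by (rule bmult_add_bmult_inv)
  finally have "n \<star> a = a \<star> (u \<star> m \<otimes> inv u)"
    using a u n N by (metis bmult_assoc bmult_one(2) bmult_closed subsetD)
  then show "n \<star> a \<in> (\<lambda>x. a \<star> x) ` N" using lambda[OF u(1) m(1)] by blast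
qed

lemma sb_ideal_imp_subgroup: "sb_ideal A M N \<Longrightarrow> subgroup N A"
  unfolding sb_ideal_def using normal_imp_subgroup by blast

lemma sb_ideal_iff:
  "sb_ideal A M N \<longleftrightarrow> N \<lhd> A \<and>
     (\<forall>a\<in>carrier A. \<forall>n\<in>N. a \<star> n \<otimes> inv a \<in> N) \<and>
     (\<forall>a\<in>carrier A. \<forall>n\<in>N. n \<star> a \<otimes> inv a \<in> N)"
proof
  assume I: "sb_ideal A M N"
  have "n \<star> a \<otimes> inv a \<in> N" if a: "a \<in> carrier A" and n: "n \<in> N" for a n
  proof -
    have "n \<star> a \<in> (\<lambda>x. a \<star> x) ` N" using I a n unfolding sb_ideal_def by blast
    then obtain m where "m \<in> N" "n \<star> a = a \<star> m" by blast
    then show ?thesis using I a unfolding sb_ideal_def by auto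
  qed
  then show "N \<lhd> A \<and> (\<forall>a\<in>carrier A. \<forall>n\<in>N. a \<star> n \<otimes> inv a \<in> N) \<and>
     (\<forall>a\<in>carrier A. \<forall>n\<in>N. n \<star> a \<otimes> inv a \<in> N)"
    using I unfolding sb_ideal_def by blast
next
  assume "N \<lhd> A \<and> (\<forall>a\<in>carrier A. \<forall>n\<in>N. a \<star> n \<otimes> inv a \<in> N) \<and>
     (\<forall>a\<in>carrier A. \<forall>n\<in>N. n \<star> a \<otimes> inv a \<in> N)"
  moreover from this have "N \<subseteq> carrier A" using normal_imp_subgroup subgroup.subset by blast
  ultimately show "sb_ideal A M N"
    unfolding sb_ideal_def
    using left_translate_subset_right_translate right_translate_subset_left_translate
    by (simp add: subset_antisym)
qed

lemma sb_ideal_left_mult_compat: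
  assumes I: "sb_ideal A M N" and "s \<in> carrier A" "s' \<in> carrier A" "s \<otimes> inv s' \<in> N" "t \<in> carrier A"
  shows "t \<star> s \<otimes> inv (t \<star> s') \<in> N"
proof -
  define n where "n = s \<otimes> inv s'"
  have n: "n \<in> N" "n \<in> carrier A" unfolding n_def using assms by auto
  have "t \<star> s = t \<star> (n \<otimes> s')" unfolding n_def using assms by (simp add: A.m_assoc)
  also have "\<dots> = t \<star> n \<otimes> inv t \<otimes> t \<star> s'" using assms n by (simp add: left_distrib)
  finally have "t \<star> s \<otimes> inv (t \<star> s') = t \<star> n \<otimes> inv t" using assms n by (simp add: A.m_assoc)
  then show ?thesis using I n assms(5) unfolding sb_ideal_def by auto
qed

lemma sb_ideal_right_mult_compat:
  assumes I: "sb_ideal A M N" and s: "s \<in> carrier A" and s': "s' \<in> carrier A"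
    and "s \<otimes> inv s' \<in> N" and t: "t \<in> carrier A"
  shows "s \<star> t \<otimes> inv (s' \<star> t) \<in> N"
proof -
  have lambda: "\<And>a n. a \<in> carrier A \<Longrightarrow> n \<in> N \<Longrightarrow> a \<star> n \<otimes> inv a \<in> N"
    using I unfolding sb_ideal_def by blast
  have N: "N \<subseteq> carrier A" using sb_ideal_imp_subgroup[OF I] subgroup.subset by blast
  \<comment> \<open>\<open>s = s' \<star> x\<close> with \<open>x \<in> N\<close>, and \<open>x \<star> t = t \<star> y\<close> with \<open>y \<in> N\<close> since \<open>N \<star> t = t \<star> N\<close>\<close>
  define u where "u = inv\<^bsub>M\<^esub> s'"
  have u: "u \<in> carrier A" "inv\<^bsub>M\<^esub> u = s'" using s' unfolding u_def by auto
  define x where "x = u \<star> s"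
  have "x = u \<star> ((s \<otimes> inv s') \<otimes> inv\<^bsub>M\<^esub> u)" unfolding x_def u(2) using s s' by (simp add: A.m_assoc)
  also have "\<dots> = u \<star> (s \<otimes> inv s') \<otimes> inv u" using u(1) s s' by (intro bmult_add_bmult_inv) auto
  finally have x: "x \<in> N" "x \<in> carrier A" using lambda[OF u(1)] assms(4) N by auto
  have "x \<star> t \<in> (\<lambda>z. t \<star> z) ` N" using I t x unfolding sb_ideal_def by blast
  then obtain y where y: "y \<in> N" "y \<in> carrier A" and xt: "x \<star> t = t \<star> y" using N by blast
  have "s \<star> t = s' \<star> x \<star> t" unfolding x_def u_def using s s' by (simp add: bmult_assoc[symmetric])
  also have "\<dots> = (s' \<star> t) \<star> y" using s' x t y by (simp add: bmult_assoc xt)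
  finally show ?thesis using lambda[of "s' \<star> t" y] s' t y by simp
qed

lemma closed_subheap_r_coset:
  assumes I: "sb_ideal A M N" and a: "a \<in> carrier A"
  shows "closed_subheap A M (N #> a)"
proof -
  have sg: "subgroup N A" using sb_ideal_imp_subgroup[OF I] .
  have diff: "s \<otimes> inv s' \<in> N" if "s \<in> N #> a" "s' \<in> N #> a" for s s'
    using A.diff_neutralizes[OF sg A.rcosetsI[OF subgroup.subset[OF sg] a]] that by blast
  have C: "N #> a \<subseteq> carrier A" using A.r_coset_subset_G[OF subgroup.subset[OF sg] a] .
  show ?thesis
    unfolding closed_subheap_def
  proof (intro conjI ballI)
    show "subheap A (N #> a)" using A.subheap_r_coset[OF sg a] .
  next
    fix s s' t assume s: "s \<in> N #> a" and s': "s' \<in> N #> a" and t: "t \<in> carrier A"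
    have sc: "s \<in> carrier A" and s'c: "s' \<in> carrier A" using s s' C by auto
    show "hbr A (t \<star> s') (t \<star> s) s \<in> N #> a"
      using A.hbr_mem_r_coset[OF sg sb_ideal_left_mult_compat[OF I s'c sc diff[OF s' s] t] s]
        t sc s'c a by simp
    show "hbr A (s' \<star> t) (s \<star> t) s \<in> N #> a"
      using A.hbr_mem_r_coset[OF sg sb_ideal_right_mult_compat[OF I s'c sc diff[OF s' s] t] s]
        t sc s'c a by simp
  qed
qed

lemma sb_ideal_iff_closed_subheap:
  assumes N: "N \<lhd> A"
  shows "sb_ideal A M N \<longleftrightarrow> closed_subheap A M N"
proof -
  have sg: "subgroup N A" using N normal_imp_subgroup by blast
  then have C: "N \<subseteq> carrier A" using subgroup.subset by blast
  show ?thesis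
  proof
    assume "sb_ideal A M N"
    then show "closed_subheap A M N" using closed_subheap_r_coset[of N \<one>] C by simp
  next
    assume cl: "closed_subheap A M N"
    have "hbr A (a \<star> n) (a \<star> \<one>) \<one> \<in> N" "hbr A (n \<star> a) (\<one> \<star> a) \<one> \<in> N"
      if "a \<in> carrier A" "n \<in> N" for a n
      using cl subgroup.one_closed[OF sg] that unfolding closed_subheap_def by blast+
    then show "sb_ideal A M N"
      unfolding sb_ideal_iff hbr_def using N C by (auto simp: subsetD)
  qed
qed

lemma sb_ideal_if_paragon:
  assumes par: "paragon A M P" and p: "p \<in> P"
  shows "sb_ideal A M (P #> inv p)"
proof -
  have sh: "subheap A P" and P: "P \<subseteq> carrier A"
    using par unfolding paragon_def normal_subheap_def subheap_def by blast+
  have N: "P #> inv p \<lhd> A"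
    using par A.normal_subheap_iff_normal_r_coset[OF P p] unfolding paragon_def by blast
  have "P #> inv p \<subseteq> carrier A" using A.r_coset_subset_G[OF P] P p by blast
  then have "heap_class A P \<one> = P #> inv p"
    using A.heap_class_eq_r_coset[OF sh p A.one_closed] by simp
  moreover have "closed_subheap A M (heap_class A P \<one>)"
    using par unfolding paragon_def by blast
  ultimately have "closed_subheap A M (P #> inv p)" by simp
  then show ?thesis using sb_ideal_iff_closed_subheap[OF N] by simp
qed

lemma paragon_if_sb_ideal:
  assumes P: "P \<subseteq> carrier A" and p: "p \<in> P" and I: "sb_ideal A M (P #> inv p)"
  shows "paragon A M P"
proof -
  have nsh: "normal_subheap A P"
    using A.normal_subheap_iff_normal_r_coset[OF P p] I unfolding sb_ideal_def by blast
  then have "heap_class A P a = (P #> inv p) #> a" if "a \<in> carrier A" for a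
    using A.heap_class_eq_r_coset[OF _ p that] unfolding normal_subheap_def by blast
  then have "closed_subheap A M (heap_class A P a)" if "a \<in> carrier A" for a
    using closed_subheap_r_coset[OF I that] that by simp
  then show ?thesis unfolding paragon_def using nsh p by blast
qed

end

theorem lemma3p16:
  fixes A M :: "'a monoid" and P :: "'a set"
  assumes "skew_brace A M" and "P \<subseteq> carrier A" and "P \<noteq> {}"
  shows "paragon A M P \<longleftrightarrow>
    (\<forall>p\<in>P. sb_ideal A M {hbr A q p \<one>\<^bsub>M\<^esub> | q. q \<in> P})"
proof -
  interpret skew_brace_struct A M by (rule skew_brace_struct.intro) fact
  have translate: "{hbr A q p \<one>\<^bsub>M\<^esub> | q. q \<in> P} = P #>\<^bsub>A\<^esub> inv\<^bsub>A\<^esub> p" if "p \<in> P" for p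
    using A.hbr_one_set_eq_r_coset assms(2) that by auto
  obtain p where p: "p \<in> P" using assms(3) by (meson ex_in_conv)
  show ?thesis
    using sb_ideal_if_paragon paragon_if_sb_ideal[OF assms(2) p] translate p by auto
qed

end
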